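(* Let $n\ge 2$. For every $T\in\mathrm{C}$ we have $\tilde T T\in\mathrm{C}^{\overline{01}}$. Consequently, $$\mathrm{A}=\begin{cases}\{T\in\mathrm{C}^\times:\ \tilde T T\in(\mathrm{C}^0)^\times\}, & n\equiv 0,2,3 \pmod 4,\\ \{T\in\mathrm{C}^\times:\ \tilde T T\in(\mathrm{C}^0\oplus\mathrm{C}^n)^\times\}, & n\equiv 1\pmod 4.\end{cases}$$
   Context: Let $\mathrm{C}$ be either the real Clifford algebra $C\ell_{p,q}$ with $p+q=n$, or the complex Clifford algebra $C\ell(\mathbb{C}^n)$. It has identity $e$ and generators $e_1,\dots,e_n$ satisfying $e_ae_b+e_be_a=2\eta_{ab}e$. In the real case $\eta=\mathrm{diag}(1,\dots,1,-1,\dots,-1)$ with $p$ entries $+1$ and $q$ entries $-1$. In the complex case $\eta=I_n$. $\mathrm{C}^k$ is the grade-$k$ subspace, spanned by the products $e_{a_1}\cdots e_{a_k}$ with $a_1<\dots<a_k$. The reversion $U\mapsto\tilde U$ is the linear anti-automorphism acting on $\mathrm{C}^k$ as multiplication by $(-1)^{k(k-1)/2}$. For $m=0,1,2,3$ let $\mathrm{C}^{\overline m}=\bigoplus_{k\equiv m \pmod 4}\mathrm{C}^k$, and $\mathrm{C}^{\overline{kl}}=\mathrm{C}^{\overline k}\oplus\mathrm{C}^{\overline l}$. For $S\subseteq\mathrm{C}$, $S^\times$ is the set of elements of $S$ invertible in $\mathrm{C}$. $\mathrm{Z}$ is the center of $\mathrm{C}$: $\mathrm{Z}=\mathrm{C}^0$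 for $n$ even and $\mathrm{Z}=\mathrm{C}^0\oplus\mathrm{C}^n$ for $n$ odd. Define $\mathrm{A}:=\{T\in\mathrm{C}^\times:\ \tilde T T\in\mathrm{Z}^\times\}$. *)

theory Defs
  imports Main "HOL-Analysis.Analysis"
begin

text \<open>Clifford algebra with generators e_0,...,e_(n-1) (0-based indexing) and
 diagonal metric eta. An element is a coefficient function on blades, i.e. on
 subsets of {0..<n}; the blade A corresponds to the ordered product of e_a, a in A.\<close>

definition cl_carrier :: "nat \<Rightarrow> (nat set \<Rightarrow> 'a::comm_ring_1) set" where
  "cl_carrier n = {x. \<forall>A. x A \<noteq> 0 \<longrightarrow> A \<subseteq> {0..<n}}"

text \<open>Sign of reordering e_A e_B: number of pairs (a,b) in A x B with b < a.\<close>
definition blade_sign :: "nat set \<Rightarrow> nat set \<Rightarrow> 'a::comm_ring_1" where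
  "blade_sign A B = (-1) ^ card {(a, b). a \<in> A \<and> b \<in> B \<and> b < a}"

definition cl_mult :: "nat \<Rightarrow> (nat \<Rightarrow> 'a::comm_ring_1) \<Rightarrow> (nat set \<Rightarrow> 'a) \<Rightarrow> (nat set \<Rightarrow> 'a) \<Rightarrow> (nat set \<Rightarrow> 'a)" where
  "cl_mult n eta x y = (\<lambda>C. \<Sum>A\<in>Pow {0..<n}. \<Sum>B\<in>Pow {0..<n}.
      if (A - B) \<union> (B - A) = C
      then blade_sign A B * (\<Prod>i\<in>A \<inter> B. eta i) * x A * y B else 0)"

definition cl_one :: "nat set \<Rightarrow> 'a::comm_ring_1" where
  "cl_one = (\<lambda>A. if A = {} then 1 else 0)"

definition cl_rev :: "(nat set \<Rightarrow> 'a::comm_ring_1) \<Rightarrow> (nat set \<Rightarrow> 'a)" where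
  "cl_rev x = (\<lambda>A. (-1) ^ (card A * (card A - 1) div 2) * x A)"

definition cl_grades :: "nat \<Rightarrow> nat set \<Rightarrow> (nat set \<Rightarrow> 'a::comm_ring_1) set" where
  "cl_grades n K = {x \<in> cl_carrier n. \<forall>A. x A \<noteq> 0 \<longrightarrow> card A \<in> K}"

definition cl_bar01 :: "nat \<Rightarrow> (nat set \<Rightarrow> 'a::comm_ring_1) set" where
  "cl_bar01 n = cl_grades n {k. k mod 4 = 0 \<or> k mod 4 = 1}"

definition cl_invertible :: "nat \<Rightarrow> (nat \<Rightarrow> 'a::comm_ring_1) \<Rightarrow> (nat set \<Rightarrow> 'a) \<Rightarrow> bool" where
  "cl_invertible n eta x \<longleftrightarrow> x \<in> cl_carrier n \<and>
     (\<exists>y \<in> cl_carrier n. cl_mult n eta x y = cl_one \<and> cl_mult n eta y x = cl_one)"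

definition cl_units :: "nat \<Rightarrow> (nat \<Rightarrow> 'a::comm_ring_1) \<Rightarrow> (nat set \<Rightarrow> 'a) set \<Rightarrow> (nat set \<Rightarrow> 'a) set" where
  "cl_units n eta S = {x \<in> S. cl_invertible n eta x}"

definition cl_center :: "nat \<Rightarrow> (nat \<Rightarrow> 'a::comm_ring_1) \<Rightarrow> (nat set \<Rightarrow> 'a) set" where
  "cl_center n eta = {z \<in> cl_carrier n. \<forall>x \<in> cl_carrier n. cl_mult n eta z x = cl_mult n eta x z}"

definition cl_A :: "nat \<Rightarrow> (nat \<Rightarrow> 'a::comm_ring_1) \<Rightarrow> (nat set \<Rightarrow> 'a) set" where
  "cl_A n eta = {T \<in> cl_units n eta (cl_carrier n).
      cl_mult n eta (cl_rev T) T \<in> cl_units n eta (cl_center n eta)}"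

definition cl_claim :: "nat \<Rightarrow> (nat \<Rightarrow> 'a::comm_ring_1) \<Rightarrow> bool" where
  "cl_claim n eta \<longleftrightarrow>
     (\<forall>T \<in> cl_carrier n. cl_mult n eta (cl_rev T) T \<in> cl_bar01 n) \<and>
     cl_A n eta =
       (if n mod 4 = 1
        then {T \<in> cl_units n eta (cl_carrier n).
                cl_mult n eta (cl_rev T) T \<in> cl_units n eta (cl_grades n {0, n})}
        else {T \<in> cl_units n eta (cl_carrier n).
                cl_mult n eta (cl_rev T) T \<in> cl_units n eta (cl_grades n {0})})"

text \<open>Real signature (p,q): eta_i = 1 for i < p, -1 otherwise (0-based).\<close>
definition eta_real :: "nat \<Rightarrow> nat \<Rightarrow> real" where
  "eta_real p i = (if i < p then 1 else -1)"

end

theory Submission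
  imports Defs
begin

text \<open>Reversion is an involutive anti-automorphism, so \<open>x = rev T * T\<close> is fixed by it. Since
  reversion multiplies grade \<open>k\<close> by \<open>(-1)^(k(k-1)/2)\<close>, which is \<open>-1\<close> exactly for
  \<open>k \<equiv> 2, 3 (mod 4)\<close>, those components of \<open>x\<close> vanish. For a nondegenerate metric, commuting
  with every generator \<open>e\<^sub>i\<close> forces each blade in the support of a central element to be
  empty or of odd size containing every index; so the centre is spanned by \<open>1\<close> and, for odd
  \<open>n\<close>, the pseudoscalar, whose grade \<open>n\<close> survives in \<open>x\<close> only when \<open>n \<equiv> 1 (mod 4)\<close>.\<close>

definition inversions :: "nat set \<Rightarrow> nat set \<Rightarrow> nat" where
  "inversions X Y = card {(a, b). a \<in> X \<and> b \<in> Y \<and> b < a}"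

lemma blade_sign_eq_inversions: "blade_sign A B = (-1) ^ inversions A B"
  by (simp add: blade_sign_def inversions_def)

lemma finite_pairs:
  "finite X \<Longrightarrow> finite Y \<Longrightarrow> finite {(a, b). a \<in> X \<and> b \<in> Y \<and> P a b}"
  by (rule finite_subset[of _ "X \<times> Y"]) auto

lemma inversions_Un_left:
  assumes "finite X1" "finite X2" "finite Y" "X1 \<inter> X2 = {}"
  shows "inversions (X1 \<union> X2) Y = inversions X1 Y + inversions X2 Y"
proof -
  have "{(a, b). a \<in> X1 \<union> X2 \<and> b \<in> Y \<and> b < a} =
      {(a, b). a \<in> X1 \<and> b \<in> Y \<and> b < a} \<union> {(a, b). a \<in> X2 \<and> b \<in> Y \<and> b < a}"
    by auto
  then show ?thesis
    unfolding inversions_def using assms by (auto intro!: card_Un_disjoint finite_pairs)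
qed

lemma inversions_Un_right:
  assumes "finite Y1" "finite Y2" "finite X" "Y1 \<inter> Y2 = {}"
  shows "inversions X (Y1 \<union> Y2) = inversions X Y1 + inversions X Y2"
proof -
  have "{(a, b). a \<in> X \<and> b \<in> Y1 \<union> Y2 \<and> b < a} =
      {(a, b). a \<in> X \<and> b \<in> Y1 \<and> b < a} \<union> {(a, b). a \<in> X \<and> b \<in> Y2 \<and> b < a}"
    by auto
  then show ?thesis
    unfolding inversions_def using assms by (auto intro!: card_Un_disjoint finite_pairs)
qed

lemma inversions_swap:
  assumes "finite A" "finite B"
  shows "inversions A B + inversions B A + card (A \<inter> B) = card A * card B"
proof -
  have split: "A \<times> B = {(a, b). a \<in> A \<and> b \<in> B \<and> b < a} \<union> {(a, b). a \<in> A \<and> b \<in> B \<and> a < b}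
      \<union> {(a, b). a \<in> A \<and> b \<in> B \<and> a = b}"
    by auto
  have "{(a, b). a \<in> B \<and> b \<in> A \<and> b < a} = prod.swap ` {(a, b). a \<in> A \<and> b \<in> B \<and> a < b}"
    by auto
  then have below: "card {(a, b). a \<in> A \<and> b \<in> B \<and> a < b} = inversions B A"
    unfolding inversions_def by (simp add: card_image)
  have diag: "card {(a, b). a \<in> A \<and> b \<in> B \<and> a = b} = card (A \<inter> B)"
    by (rule bij_betw_same_card[of fst]) (auto simp: bij_betw_def inj_on_def image_def)
  have "card (A \<times> B) = inversions A B + card {(a, b). a \<in> A \<and> b \<in> B \<and> a < b}
      + card {(a, b). a \<in> A \<and> b \<in> B \<and> a = b}"
    unfolding split inversions_def by (subst card_Un_disjoint, auto simp: finite_pairs assms)+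
  then show ?thesis using below diag by (simp add: card_cartesian_product)
qed

lemma inversions_self:
  assumes "finite X" shows "inversions X X = card X * (card X - 1) div 2"
proof -
  have "card X * (card X - 1) = 2 * inversions X X"
    using inversions_swap[OF assms assms] by (simp add: diff_mult_distrib2)
  then show ?thesis by simp
qed

lemma blade_sign_square: "blade_sign A B * blade_sign A B = (1::'a::comm_ring_1)"
  by (simp add: blade_sign_eq_inversions power_add[symmetric])

lemma blade_sign_swap_product:
  "blade_sign A B * blade_sign B A = (-1::'a::comm_ring_1) ^ (inversions A B + inversions B A)"
  by (simp add: blade_sign_eq_inversions power_add)

text \<open>The sign identity behind \<open>rev (e\<^sub>A e\<^sub>B) = rev e\<^sub>B rev e\<^sub>A\<close>: splitting \<open>A = P \<union> I\<close>,
  \<open>B = Q \<union> I\<close> with \<open>I = A \<inter> B\<close>, both exponents agree modulo 2.\<close>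

lemma blade_sign_symdiff_self:
  assumes "finite A" "finite B"
  shows "blade_sign ((A - B) \<union> (B - A)) ((A - B) \<union> (B - A)) * blade_sign A B
       = blade_sign A A * blade_sign B B * (blade_sign B A :: 'a::comm_ring_1)"
proof -
  define P Q I where "P = A - B" and "Q = B - A" and "I = A \<inter> B"
  have fin: "finite P" "finite Q" "finite I" and
    disj: "P \<inter> Q = {}" "P \<inter> I = {}" "Q \<inter> I = {}" "Q \<inter> P = {}" "I \<inter> P = {}" "I \<inter> Q = {}"
    using assms by (auto simp: P_def Q_def I_def)
  have A: "A = P \<union> I" and B: "B = Q \<union> I" by (auto simp: P_def Q_def I_def)
  note additive = inversions_Un_left inversions_Un_right fin disj finite_UnI
  have "inversions (P \<union> Q) (P \<union> Q) + inversions A B + 2 * (inversions I P + inversions I I + inversions Q I)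
      = inversions A A + inversions B B + inversions B A + 2 * inversions P Q"
    unfolding A B by (simp add: additive)
  then have "(-1::'a) ^ (inversions (P \<union> Q) (P \<union> Q) + inversions A B)
      = (-1) ^ (inversions A A + inversions B B + inversions B A)"
    by (metis (no_types) power_add power_mult power_minus1_even mult_1_right)
  then show ?thesis
    unfolding blade_sign_eq_inversions power_add[symmetric] P_def Q_def .
qed

definition reversion_sign :: "nat set \<Rightarrow> 'a::comm_ring_1" where
  "reversion_sign A = (-1) ^ (card A * (card A - 1) div 2)"

lemma cl_rev_eq: "cl_rev x = (\<lambda>A. reversion_sign A * x A)"
  by (simp add: cl_rev_def reversion_sign_def)

lemma reversion_sign_eq_blade_sign: "finite A \<Longrightarrow> reversion_sign A = blade_sign A A"
  by (simp add: reversion_sign_def blade_sign_eq_inversions inversions_self)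

lemma reversion_sign_square: "reversion_sign A * reversion_sign A = (1::'a::comm_ring_1)"
  by (simp add: reversion_sign_def power_add[symmetric])

lemma reversion_sign_grade_2_3:
  assumes "card A mod 4 = 2 \<or> card A mod 4 = 3"
  shows "reversion_sign A = (-1::'a::comm_ring_1)"
proof -
  obtain m where "card A = 4 * m + 2 \<or> card A = 4 * m + 3"
    using assms by (metis div_mult_mod_eq mult.commute)
  then have "card A * (card A - 1) = 2 * ((2 * m + 1) * (4 * m + 1)) \<or>
      card A * (card A - 1) = 2 * ((4 * m + 3) * (2 * m + 1))"
    by (auto simp: algebra_simps)
  then have "odd (card A * (card A - 1) div 2)" by auto
  then show ?thesis unfolding reversion_sign_def by simp
qed

lemma cl_rev_involution: "cl_rev (cl_rev x) = (x :: nat set \<Rightarrow> 'a::comm_ring_1)"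
  by (simp add: cl_rev_eq mult.assoc[symmetric] reversion_sign_square)

lemma cl_rev_mult:
  "cl_rev (cl_mult n eta x y) = cl_mult n eta (cl_rev y) (cl_rev (x :: nat set \<Rightarrow> 'a::comm_ring_1))"
proof (rule ext)
  fix C
  have "cl_rev (cl_mult n eta x y) C = (\<Sum>A\<in>Pow {0..<n}. \<Sum>B\<in>Pow {0..<n}.
      reversion_sign C * (if (A - B) \<union> (B - A) = C
        then blade_sign A B * (\<Prod>i\<in>A \<inter> B. eta i) * x A * y B else 0))"
    by (simp add: cl_rev_eq cl_mult_def sum_distrib_left)
  also have "\<dots> = (\<Sum>A\<in>Pow {0..<n}. \<Sum>B\<in>Pow {0..<n}.
      if (B - A) \<union> (A - B) = C
      then blade_sign B A * (\<Prod>i\<in>B \<inter> A. eta i) * (reversion_sign B * y B) * (reversion_sign A * x A)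
      else 0)"
  proof (intro sum.cong refl)
    fix A B assume "A \<in> Pow {0..<n}" "B \<in> Pow {0..<n}"
    then have fin: "finite A" "finite B" by (auto intro: finite_subset)
    have sign: "reversion_sign ((A - B) \<union> (B - A)) * blade_sign A B
        = reversion_sign A * reversion_sign B * (blade_sign B A :: 'a)"
      using blade_sign_symdiff_self[OF fin] fin
      by (simp add: reversion_sign_eq_blade_sign ac_simps)
    have sym: "(B - A) \<union> (A - B) = (A - B) \<union> (B - A)" "B \<inter> A = A \<inter> B" by blast+
    show "reversion_sign C * (if (A - B) \<union> (B - A) = C
        then blade_sign A B * (\<Prod>i\<in>A \<inter> B. eta i) * x A * y B else 0) =
      (if (B - A) \<union> (A - B) = C
        then blade_sign B A * (\<Prod>i\<in>B \<inter> A. eta i) * (reversion_sign B * y B) * (reversion_sign A * x A)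
        else 0)"
    proof (cases "(A - B) \<union> (B - A) = C")
      case True
      have "reversion_sign C * (blade_sign A B * (\<Prod>i\<in>A \<inter> B. eta i) * x A * y B)
          = (reversion_sign ((A - B) \<union> (B - A)) * blade_sign A B) * (\<Prod>i\<in>A \<inter> B. eta i) * x A * y B"
        using True by (simp add: ac_simps)
      also have "\<dots> = blade_sign B A * (\<Prod>i\<in>B \<inter> A. eta i) * (reversion_sign B * y B) * (reversion_sign A * x A)"
        unfolding sign sym by (simp add: ac_simps)
      finally show ?thesis using True sym by simp
    qed (use sym in simp)
  qed
  also have "\<dots> = cl_mult n eta (cl_rev y) (cl_rev x) C"
    unfolding cl_mult_def cl_rev_eq by (rule sum.swap)
  finally show "cl_rev (cl_mult n eta x y) C = cl_mult n eta (cl_rev y) (cl_rev x) C" .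
qed

lemma cl_mult_in_carrier: "cl_mult n eta x y \<in> cl_carrier n"
  unfolding cl_carrier_def
proof (intro CollectI allI impI)
  fix C assume nonzero: "cl_mult n eta x y C \<noteq> 0"
  show "C \<subseteq> {0..<n}"
  proof (rule ccontr)
    assume "\<not> C \<subseteq> {0..<n}"
    then have "\<forall>A\<in>Pow {0..<n}. \<forall>B\<in>Pow {0..<n}. (A - B) \<union> (B - A) \<noteq> C" by blast
    then show False using nonzero unfolding cl_mult_def by simp
  qed
qed

lemma cl_rev_fixed_in_bar01:
  fixes x :: "nat set \<Rightarrow> 'a::field_char_0"
  assumes "x \<in> cl_carrier n" and fixed: "cl_rev x = x"
  shows "x \<in> cl_bar01 n"
proof -
  have "x A = 0" if "card A mod 4 = 2 \<or> card A mod 4 = 3" for A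
  proof -
    have "reversion_sign A * x A = x A"
      using fun_cong[OF fixed, of A] unfolding cl_rev_eq .
    then have "- x A = x A" by (simp only: reversion_sign_grade_2_3[OF that] mult_minus1)
    then show ?thesis by simp
  qed
  moreover have "k mod 4 = 0 \<or> k mod 4 = 1 \<or> k mod 4 = 2 \<or> k mod 4 = 3" for k :: nat
    by presburger
  ultimately show ?thesis
    using assms(1) unfolding cl_bar01_def cl_grades_def by blast
qed

lemma cl_rev_mult_self_in_bar01:
  fixes T :: "nat set \<Rightarrow> 'a::field_char_0"
  shows "cl_mult n eta (cl_rev T) T \<in> cl_bar01 n"
  by (rule cl_rev_fixed_in_bar01) (simp_all only: cl_mult_in_carrier cl_rev_mult cl_rev_involution)

definition cl_basis_vector :: "nat \<Rightarrow> nat set \<Rightarrow> 'a::comm_ring_1" where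
  "cl_basis_vector i = (\<lambda>A. if A = {i} then 1 else 0)"

lemma cl_basis_vector_in_carrier: "i < n \<Longrightarrow> cl_basis_vector i \<in> cl_carrier n"
  by (auto simp: cl_carrier_def cl_basis_vector_def)

lemma symdiff_eq_symdiff_iff: "(A - B) \<union> (B - A) = (A' - B) \<union> (B - A') \<longleftrightarrow> A = A'"
  by (auto simp: set_eq_iff)

lemma cl_mult_basis_vector_right:
  assumes "i < n" "A \<subseteq> {0..<n}"
  shows "cl_mult n eta z (cl_basis_vector i) ((A - {i}) \<union> ({i} - A))
       = blade_sign A {i} * (\<Prod>j\<in>A \<inter> {i}. eta j) * z A"
proof -
  have "cl_mult n eta z (cl_basis_vector i) ((A - {i}) \<union> ({i} - A)) = (\<Sum>A'\<in>Pow {0..<n}.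
      if A' = A then blade_sign A' {i} * (\<Prod>j\<in>A' \<inter> {i}. eta j) * z A' else 0)"
    unfolding cl_mult_def
  proof (rule sum.cong[OF refl])
    fix A' assume "A' \<in> Pow {0..<n}"
    have "(\<Sum>B\<in>Pow {0..<n}. if (A' - B) \<union> (B - A') = (A - {i}) \<union> ({i} - A)
          then blade_sign A' B * (\<Prod>j\<in>A' \<inter> B. eta j) * z A' * cl_basis_vector i B else 0)
        = (\<Sum>B\<in>Pow {0..<n}. if B = {i} then (if A' = A
          then blade_sign A' {i} * (\<Prod>j\<in>A' \<inter> {i}. eta j) * z A' else 0) else 0)"
      by (rule sum.cong[OF refl]) (auto simp: cl_basis_vector_def symdiff_eq_symdiff_iff)
    then show "(\<Sum>B\<in>Pow {0..<n}. if (A' - B) \<union> (B - A') = (A - {i}) \<union> ({i} - A)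
          then blade_sign A' B * (\<Prod>j\<in>A' \<inter> B. eta j) * z A' * cl_basis_vector i B else 0)
        = (if A' = A then blade_sign A' {i} * (\<Prod>j\<in>A' \<inter> {i}. eta j) * z A' else 0)"
      using assms by (simp add: sum.delta)
  qed
  then show ?thesis using assms by (simp add: sum.delta)
qed

lemma cl_mult_basis_vector_left:
  assumes "i < n" "A \<subseteq> {0..<n}"
  shows "cl_mult n eta (cl_basis_vector i) z ((A - {i}) \<union> ({i} - A))
       = blade_sign {i} A * (\<Prod>j\<in>A \<inter> {i}. eta j) * z A"
proof -
  have flip: "(A - {i}) \<union> ({i} - A) = ({i} - A) \<union> (A - {i})" "A \<inter> {i} = {i} \<inter> A" by blast+
  have "cl_mult n eta (cl_basis_vector i) z (({i} - A) \<union> (A - {i})) = (\<Sum>A'\<in>Pow {0..<n}.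
      if A' = {i} then blade_sign {i} A * (\<Prod>j\<in>{i} \<inter> A. eta j) * z A else 0)"
    unfolding cl_mult_def
  proof (rule sum.cong[OF refl])
    fix A' assume "A' \<in> Pow {0..<n}"
    have "(\<Sum>B\<in>Pow {0..<n}. if (A' - B) \<union> (B - A') = ({i} - A) \<union> (A - {i})
          then blade_sign A' B * (\<Prod>j\<in>A' \<inter> B. eta j) * cl_basis_vector i A' * z B else 0)
        = (\<Sum>B\<in>Pow {0..<n}. if B = A then (if A' = {i}
          then blade_sign {i} A * (\<Prod>j\<in>{i} \<inter> A. eta j) * z A else 0) else 0)"
      by (rule sum.cong[OF refl])
        (auto simp: cl_basis_vector_def symdiff_eq_symdiff_iff Un_commute[of "_ - {i}"])
    then show "(\<Sum>B\<in>Pow {0..<n}. if (A' - B) \<union> (B - A') = ({i} - A) \<union> (A - {i})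
          then blade_sign A' B * (\<Prod>j\<in>A' \<inter> B. eta j) * cl_basis_vector i A' * z B else 0)
        = (if A' = {i} then blade_sign {i} A * (\<Prod>j\<in>{i} \<inter> A. eta j) * z A else 0)"
      using assms by (simp add: sum.delta)
  qed
  then show ?thesis using assms unfolding flip by (simp add: sum.delta)
qed

text \<open>Compare the coefficients of \<open>e\<^sub>A e\<^sub>i\<close> in \<open>z e\<^sub>i = e\<^sub>i z\<close>: the signs of \<open>e\<^sub>A e\<^sub>i\<close> and
  \<open>e\<^sub>i e\<^sub>A\<close> differ by \<open>(-1)^(|A| - |A \<inter> {i}|)\<close>.\<close>

lemma cl_center_blade_parity:
  fixes eta :: "nat \<Rightarrow> 'a::field_char_0"
  assumes eta: "\<forall>i<n. eta i \<noteq> 0" and z: "z \<in> cl_center n eta"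
    and A: "A \<subseteq> {0..<n}" and nonzero: "z A \<noteq> 0" and i: "i < n"
  shows "even (card A - card (A \<inter> {i}))"
proof -
  have "cl_mult n eta z (cl_basis_vector i) = cl_mult n eta (cl_basis_vector i) z"
    using z cl_basis_vector_in_carrier[OF i] by (auto simp: cl_center_def)
  then have "blade_sign A {i} * (\<Prod>j\<in>A \<inter> {i}. eta j) * z A
      = blade_sign {i} A * (\<Prod>j\<in>A \<inter> {i}. eta j) * z A"
    using cl_mult_basis_vector_right[OF i A] cl_mult_basis_vector_left[OF i A] by metis
  moreover have "(\<Prod>j\<in>A \<inter> {i}. eta j) \<noteq> 0"
    using eta i by (cases "i \<in> A") (auto simp: Int_insert_right)
  ultimately have "blade_sign A {i} = (blade_sign {i} A :: 'a)" using nonzero by simp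
  then have "(-1::'a) ^ (inversions A {i} + inversions {i} A) = 1"
    by (metis blade_sign_swap_product blade_sign_square)
  then have "even (inversions A {i} + inversions {i} A)"
    by (auto simp: minus_one_power_iff split: if_splits)
  moreover have "inversions A {i} + inversions {i} A + card (A \<inter> {i}) = card A"
    using inversions_swap[of A "{i}"] A by (auto intro: finite_subset)
  ultimately show ?thesis by (metis add_diff_cancel_right')
qed

lemma cl_center_support:
  fixes eta :: "nat \<Rightarrow> 'a::field_char_0"
  assumes eta: "\<forall>i<n. eta i \<noteq> 0" and z: "z \<in> cl_center n eta" and nonzero: "z A \<noteq> 0"
  shows "A = {} \<or> (A = {0..<n} \<and> odd n)"
proof (cases "A = {}")
  case False
  have A: "A \<subseteq> {0..<n}" using z nonzero by (auto simp: cl_center_def cl_carrier_def)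
  then have fin: "finite A" by (rule finite_subset) simp
  obtain i where "i \<in> A" using False by blast
  then have "even (card A - 1)" and "card A \<ge> 1"
    using cl_center_blade_parity[OF eta z A nonzero, of i] A fin
    by (auto simp: Int_absorb1 Suc_le_eq card_gt_0_iff)
  then have odd: "odd (card A)" by (metis dvd_diff_nat even_diff_nat odd_one le_add_diff_inverse2 even_add)
  have "A = {0..<n}"
  proof (rule ccontr)
    assume "A \<noteq> {0..<n}"
    then obtain j where "j < n" "j \<notin> A"
      using A by (meson atLeastLessThan_iff subsetI subset_antisym zero_le)
    then have "even (card A)"
      using cl_center_blade_parity[OF eta z A nonzero \<open>j < n\<close>] by (simp add: disjoint_iff)
    with odd show False by simp
  qed
  with odd show ?thesis by simp
qed simp

lemma blade_sign_central_comm: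
  assumes "A = {} \<or> (A = {0..<n} \<and> odd n)" "B \<subseteq> {0..<n}"
  shows "blade_sign A B = (blade_sign B A :: 'a::comm_ring_1)"
  using assms(1)
proof
  assume "A = {}" then show ?thesis by (simp add: blade_sign_eq_inversions inversions_def)
next
  assume full: "A = {0..<n} \<and> odd n"
  have "finite B" using assms(2) finite_subset by blast
  moreover have "A \<inter> B = B" using full assms(2) by blast
  ultimately have "inversions A B + inversions B A + card B = n * card B"
    using inversions_swap[of A B] full by simp
  then have "inversions A B + inversions B A = (n - 1) * card B" by (simp add: diff_mult_distrib)
  then have "blade_sign A B * blade_sign B A = (1::'a)"
    using full by (simp add: blade_sign_swap_product)
  then show ?thesis by (metis blade_sign_square mult.assoc mult_1)
qed

lemma cl_center_intro:
  assumes x: "x \<in> cl_carrier n"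
    and support: "\<forall>A. x A \<noteq> 0 \<longrightarrow> A = {} \<or> (A = {0..<n} \<and> odd n)"
  shows "x \<in> cl_center n (eta :: nat \<Rightarrow> 'a::comm_ring_1)"
  unfolding cl_center_def
proof (intro CollectI conjI ballI x)
  fix y :: "nat set \<Rightarrow> 'a"
  show "cl_mult n eta x y = cl_mult n eta y x"
  proof (rule ext)
    fix C
    have "cl_mult n eta x y C = (\<Sum>A\<in>Pow {0..<n}. \<Sum>B\<in>Pow {0..<n}.
        if (B - A) \<union> (A - B) = C then blade_sign B A * (\<Prod>i\<in>B \<inter> A. eta i) * y B * x A else 0)"
      unfolding cl_mult_def
    proof (intro sum.cong refl)
      fix A B assume "B \<in> Pow {0..<n}"
      then have "x A \<noteq> 0 \<Longrightarrow> blade_sign A B = (blade_sign B A :: 'a)"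
        using support blade_sign_central_comm[of A n B] by auto
      moreover have "(B - A) \<union> (A - B) = (A - B) \<union> (B - A)" "B \<inter> A = A \<inter> B" by blast+
      ultimately show "(if (A - B) \<union> (B - A) = C then blade_sign A B * (\<Prod>i\<in>A \<inter> B. eta i) * x A * y B else 0) =
         (if (B - A) \<union> (A - B) = C then blade_sign B A * (\<Prod>i\<in>B \<inter> A. eta i) * y B * x A else 0)"
        by (cases "x A = 0") (simp_all add: ac_simps)
    qed
    also have "\<dots> = cl_mult n eta y x C" unfolding cl_mult_def by (rule sum.swap)
    finally show "cl_mult n eta x y C = cl_mult n eta y x C" .
  qed
qed

lemma cl_center_eq:
  fixes eta :: "nat \<Rightarrow> 'a::field_char_0"
  assumes "\<forall>i<n. eta i \<noteq> 0"
  shows "cl_center n eta =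
    {x \<in> cl_carrier n. \<forall>A. x A \<noteq> 0 \<longrightarrow> A = {} \<or> (A = {0..<n} \<and> odd n)}"
proof
  show "cl_center n eta \<subseteq> {x \<in> cl_carrier n. \<forall>A. x A \<noteq> 0 \<longrightarrow> A = {} \<or> (A = {0..<n} \<and> odd n)}"
    using cl_center_support[OF assms] by (auto simp: cl_center_def)
qed (use cl_center_intro in blast)

lemma cl_bar01_in_center_iff:
  fixes eta :: "nat \<Rightarrow> 'a::field_char_0"
  assumes eta: "\<forall>i<n. eta i \<noteq> 0" and x: "x \<in> cl_bar01 n"
  shows "x \<in> cl_center n eta \<longleftrightarrow> x \<in> cl_grades n (if n mod 4 = 1 then {0, n} else {0})"
    (is "_ \<longleftrightarrow> _ \<in> cl_grades n ?K")
proof -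
  have carrier: "x \<in> cl_carrier n"
    and grade: "\<And>A. x A \<noteq> 0 \<Longrightarrow> card A mod 4 = 0 \<or> card A mod 4 = 1"
    using x by (auto simp: cl_bar01_def cl_grades_def)
  have support_iff: "A = {} \<or> (A = {0..<n} \<and> odd n) \<longleftrightarrow> card A \<in> ?K" if nonzero: "x A \<noteq> 0" for A
  proof -
    have A: "A \<subseteq> {0..<n}" using carrier nonzero by (auto simp: cl_carrier_def)
    then have fin: "finite A" by (rule finite_subset) simp
    show ?thesis
    proof (cases "card A = 0")
      case True
      then show ?thesis using fin by simp
    next
      case False
      have "n mod 4 = 0 \<or> n mod 4 = 1" if "card A = n" using grade[OF nonzero] that by simp
      then have "A = {0..<n} \<and> odd n \<longleftrightarrow> card A = n \<and> n mod 4 = 1"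
        using card_subset_eq[OF finite_atLeastLessThan A] by auto presburger+
      then show ?thesis using False fin by auto
    qed
  qed
  show ?thesis
    unfolding cl_center_eq[OF eta] cl_grades_def using carrier support_iff by simp
qed

lemma cl_claim_nondegenerate:
  fixes eta :: "nat \<Rightarrow> 'a::field_char_0"
  assumes eta: "\<forall>i<n. eta i \<noteq> 0"
  shows "cl_claim n eta"
proof -
  have "cl_A n eta = {T \<in> cl_units n eta (cl_carrier n). cl_mult n eta (cl_rev T) T
      \<in> cl_units n eta (cl_grades n (if n mod 4 = 1 then {0, n} else {0}))}"
    unfolding cl_A_def cl_units_def
    using cl_bar01_in_center_iff[OF eta cl_rev_mult_self_in_bar01] by auto
  then show ?thesis
    unfolding cl_claim_def by (cases "n mod 4 = 1") (simp_all add: cl_rev_mult_self_in_bar01)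
qed

theorem mainTheorem5:
  fixes n :: nat
  assumes "n \<ge> 2"
  shows "(\<forall>p q. p + q = n \<longrightarrow> cl_claim n (eta_real p)) \<and>
         cl_claim n (\<lambda>_. (1::complex))"
proof (intro conjI allI impI)
  fix p q :: nat
  show "cl_claim n (eta_real p)" by (rule cl_claim_nondegenerate) (simp add: eta_real_def)
qed (rule cl_claim_nondegenerate, simp)

end
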